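(* Let $n\ge2$ and consider the sequential distributive $n$-site phosphorylation system with positive rate constants $k_{\mathrm{on}_i},k_{\mathrm{off}_i},k_{\mathrm{cat}_i},\ell_{\mathrm{on}_i},\ell_{\mathrm{off}_i},\ell_{\mathrm{cat}_i}$ ($i=0,\dots,n-1$) and positive total amounts $S_{tot},E_{tot},F_{tot}$. Assume \[ S_{tot}>F_{tot}. \] Then there is a choice of rate constants for which the system is multistationary. More explicitly, for any choice of positive $k_{\mathrm{cat}_1},\ell_{\mathrm{cat}_1}$ satisfying \[ \frac{k_{\mathrm{cat}_1}}{\ell_{\mathrm{cat}_1}}>\max\left\{\frac{F_{tot}}{S_{tot}-F_{tot}},\frac{F_{tot}}{E_{tot}}\right\}, \] fix any values of the remaining rate constants and positive numbers $h_4,\dots,h_{2n+3}$ such that $i\,h_{n+5}<h_{i+3}$ for $i=1,\dots,n$ and $(i-1)\,h_{n+5}<h_{n+i+3}$ for $i\in\{1,3,4,\dots,n\}$. Then there exists $t_0>0$ such that for any $t\in(0,t_0)$ the system (with the same $S_{tot},E_{tot},F_{tot}$) is multistationary after the rescalings \[ k_{\mathrm{on}_0}\mapsto t^{h_{n+4}}k_{\mathrm{on}_0},\quad k_{\mathrm{on}_i}\mapsto t^{h_{n+4+i}-h_{i+3}}k_{\mathrm{on}_i}\ (i=1,\dots,n-1),\quad \ell_{\mathrm{on}_i}\mapsto t^{h_{n+4+i}-h_{i+4}}\ell_{\mathrm{on}_i}\ (i=0,\dots,n-1). \] Similarly, for any fixed choice of rate constants and total conservation constants satisfying the two displayed inequalities,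 there exist positive constants $M_1,\dots,M_{4n-2}$ such that for any positive $\gamma_1,\dots,\gamma_{2n}$ verifying \[ \gamma_i<M_i\ (i=1,\dots,2n),\qquad \frac{\gamma_i}{\gamma_{n+2}^{\,i}}<M_{2n+i}\ (i=1,\dots,n),\qquad \frac{\gamma_{n+i}}{\gamma_{n+2}^{\,i-1}}<M_{3n-2+i}\ (i=3,\dots,n), \] the rescaling \[ k_{\mathrm{on}_0}\mapsto\gamma_{n+1}k_{\mathrm{on}_0},\quad k_{\mathrm{on}_i}\mapsto\frac{\gamma_{n+1+i}}{\gamma_i}k_{\mathrm{on}_i}\ (i=1,\dots,n-1),\quad \ell_{\mathrm{on}_i}\mapsto\frac{\gamma_{n+1+i}}{\gamma_{i+1}}\ell_{\mathrm{on}_i}\ (i=0,\dots,n-1) \] (all other constants unchanged) gives rise to a multistationary system.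
   Context: The sequential distributive $n$-site phosphorylation network has species $S_0,\dots,S_n$ (substrate with $i$ phosphate groups), kinase $E$, phosphatase $F$, and intermediates $ES_0,\dots,ES_{n-1}$, $FS_1,\dots,FS_n$, with reactions $S_i+E\rightleftarrows ES_i$ (forward $k_{\mathrm{on}_i}$, backward $k_{\mathrm{off}_i}$), $ES_i\to S_{i+1}+E$ ($k_{\mathrm{cat}_i}$), $S_{i+1}+F\rightleftarrows FS_{i+1}$ (forward $\ell_{\mathrm{on}_i}$, backward $\ell_{\mathrm{off}_i}$), $FS_{i+1}\to S_i+F$ ($\ell_{\mathrm{cat}_i}$), $i=0,\dots,n-1$. With concentrations $s_0,\dots,s_n,e,f$, $y_i$ of $ES_i$ and $u_i$ of $FS_{i+1}$, the mass-action system is \[ \begin{aligned} \dot s_0&=-k_{\mathrm{on}_0}s_0e+k_{\mathrm{off}_0}y_0+\ell_{\mathrm{cat}_0}u_0,\\ \dot s_i&=k_{\mathrm{cat}_{i-1}}y_{i-1}-k_{\mathrm{on}_i}s_ie+k_{\mathrm{off}_i}y_i+\ell_{\mathrm{cat}_i}u_i-\ell_{\mathrm{on}_{i-1}}s_if+\ell_{\mathrm{off}_{i-1}}u_{i-1},\quad 1\le i\le n-1,\\ \dot s_n&=k_{\mathrm{cat}_{n-1}}y_{n-1}-\ell_{\mathrm{on}_{n-1}}s_nf+\ell_{\mathrm{off}_{n-1}}u_{n-1},\\ \dot y_i&=k_{\mathrm{on}_i}s_ie-(k_{\mathrm{off}_i}+k_{\mathrm{cat}_i})y_i,\quad \dot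 u_i=\ell_{\mathrm{on}_i}s_{i+1}f-(\ell_{\mathrm{off}_i}+\ell_{\mathrm{cat}_i})u_i,\quad 0\le i\le n-1,\\ \dot e&=-\textstyle\sum_i\dot y_i,\qquad \dot f=-\sum_i\dot u_i, \end{aligned} \] with conservation laws $\sum_{i=0}^ns_i+\sum_{i=0}^{n-1}y_i+\sum_{i=0}^{n-1}u_i=S_{tot}$, $e+\sum_iy_i=E_{tot}$, $f+\sum_iu_i=F_{tot}$. The system is multistationary (for given rate constants and totals) if there are at least two positive points (all concentrations $>0$) at which all right-hand sides vanish and the three conservation laws hold with the given $S_{tot},E_{tot},F_{tot}$. *)

theory Defs
  imports Complex_Main
begin

record rates =
  kon  :: "nat \<Rightarrow> real"
  koff :: "nat \<Rightarrow> real"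
  kcat :: "nat \<Rightarrow> real"
  lon  :: "nat \<Rightarrow> real"
  loff :: "nat \<Rightarrow> real"
  lcat :: "nat \<Rightarrow> real"

definition pos_rates :: "nat \<Rightarrow> rates \<Rightarrow> bool" where
  "pos_rates n r \<longleftrightarrow> (\<forall>i<n. 0 < kon r i \<and> 0 < koff r i \<and> 0 < kcat r i
                            \<and> 0 < lon r i \<and> 0 < loff r i \<and> 0 < lcat r i)"

text \<open>Concentrations: s i (i = 0..n), y i = [ES_i], u i = [FS_(i+1)] (i = 0..n-1), e, f.
  All right-hand sides of the mass-action system vanish.\<close>
definition is_steady ::
  "nat \<Rightarrow> rates \<Rightarrow> (nat \<Rightarrow> real) \<Rightarrow> (nat \<Rightarrow> real) \<Rightarrow> (nat \<Rightarrow> real) \<Rightarrow> real \<Rightarrow> real \<Rightarrow> bool" where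
  "is_steady n r s y u e f \<longleftrightarrow>
     (- kon r 0 * s 0 * e + koff r 0 * y 0 + lcat r 0 * u 0 = 0) \<and>
     (\<forall>i. 1 \<le> i \<and> i \<le> n - 1 \<longrightarrow>
        kcat r (i - 1) * y (i - 1) - kon r i * s i * e + koff r i * y i + lcat r i * u i
        - lon r (i - 1) * s i * f + loff r (i - 1) * u (i - 1) = 0) \<and>
     (kcat r (n - 1) * y (n - 1) - lon r (n - 1) * s n * f + loff r (n - 1) * u (n - 1) = 0) \<and>
     (\<forall>i<n. kon r i * s i * e - (koff r i + kcat r i) * y i = 0) \<and>
     (\<forall>i<n. lon r i * s (Suc i) * f - (loff r i + lcat r i) * u i = 0) \<and>
     (- (\<Sum>i<n. kon r i * s i * e - (koff r i + kcat r i) * y i) = 0) \<and>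
     (- (\<Sum>i<n. lon r i * s (Suc i) * f - (loff r i + lcat r i) * u i) = 0)"

definition conserved ::
  "nat \<Rightarrow> real \<Rightarrow> real \<Rightarrow> real \<Rightarrow> (nat \<Rightarrow> real) \<Rightarrow> (nat \<Rightarrow> real) \<Rightarrow> (nat \<Rightarrow> real) \<Rightarrow> real \<Rightarrow> real \<Rightarrow> bool" where
  "conserved n Stot Etot Ftot s y u e f \<longleftrightarrow>
     (\<Sum>i\<le>n. s i) + (\<Sum>i<n. y i) + (\<Sum>i<n. u i) = Stot \<and>
     e + (\<Sum>i<n. y i) = Etot \<and>
     f + (\<Sum>i<n. u i) = Ftot"

definition positive_point ::
  "nat \<Rightarrow> (nat \<Rightarrow> real) \<Rightarrow> (nat \<Rightarrow> real) \<Rightarrow> (nat \<Rightarrow> real) \<Rightarrow> real \<Rightarrow> real \<Rightarrow> bool" where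
  "positive_point n s y u e f \<longleftrightarrow>
     (\<forall>i\<le>n. 0 < s i) \<and> (\<forall>i<n. 0 < y i \<and> 0 < u i) \<and> 0 < e \<and> 0 < f"

definition multistationary :: "nat \<Rightarrow> rates \<Rightarrow> real \<Rightarrow> real \<Rightarrow> real \<Rightarrow> bool" where
  "multistationary n r Stot Etot Ftot \<longleftrightarrow>
     (\<exists>s1 y1 u1 e1 f1 s2 y2 u2 e2 f2.
        positive_point n s1 y1 u1 e1 f1 \<and> is_steady n r s1 y1 u1 e1 f1 \<and>
        conserved n Stot Etot Ftot s1 y1 u1 e1 f1 \<and>
        positive_point n s2 y2 u2 e2 f2 \<and> is_steady n r s2 y2 u2 e2 f2 \<and>
        conserved n Stot Etot Ftot s2 y2 u2 e2 f2 \<and>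
        ((\<exists>i\<le>n. s1 i \<noteq> s2 i) \<or> (\<exists>i<n. y1 i \<noteq> y2 i \<or> u1 i \<noteq> u2 i) \<or> e1 \<noteq> e2 \<or> f1 \<noteq> f2))"

end

theory Submission
  imports Defs
begin

text \<open>
  For the network with rates rescaled by \<open>\<gamma>\<close>, a steady state is determined by \<open>z = e / f\<close>,
  \<open>s\<^sub>0\<close> and \<open>f\<close>: all other concentrations are monomials in them. The conservation laws then fix
  \<open>s\<^sub>0 = X z\<close> and \<open>f = F z\<close> and leave a single equation \<open>g z = 0\<close>, where \<open>X\<close>, \<open>F\<close>, \<open>g\<close> are
  built from polynomials \<open>A\<close>, \<open>B\<close>, \<open>P\<close> in \<open>z\<close>; distinct positive roots of \<open>g\<close> give distinct
  steady states.

  Put \<open>\<epsilon> = \<gamma>\<^sub>n\<^sub>+\<^sub>2\<close> and \<open>z = w / \<epsilon>\<close>. In the admissible region all but one coefficient of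
  \<open>\<epsilon> D(w/\<epsilon>)\<close>, \<open>\<epsilon> z A(w/\<epsilon>)\<close> and \<open>P(w/\<epsilon>)\<close> are small, so on a compact range of \<open>w\<close> these
  are close to \<open>c\<^sub>1 w\<^sup>2\<close>, \<open>k\<^sub>1 w\<^sup>2\<close> and \<open>1\<close>. The bound on \<open>kcat\<^sub>1 / lcat\<^sub>1\<close> makes
  \<open>c\<^sub>1 > 0\<close> and forces \<open>g > 0\<close> at a small \<open>w\<close> and \<open>g < 0\<close> at a large one. Since \<open>P\<close> has
  degree \<open>n\<close>, \<open>X P\<close> reaches \<open>Stot\<close> before \<open>D\<close> vanishes, and there \<open>g\<close> is positive again: the
  intermediate value theorem gives two roots. Finally \<open>\<gamma>\<^sub>j = t\<^bsup>h\<^sub>j\<^sub>+\<^sub>3\<^esup>\<close> is admissible for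
  small \<open>t\<close>.
\<close>

lemma first_zero_crossing:
  fixes h :: "real \<Rightarrow> real"
  assumes cont: "continuous_on {a..b} h" and "a \<le> b" and ha: "0 < h a" and hb: "h b \<le> 0"
  shows "\<exists>c\<in>{a<..b}. h c = 0 \<and> (\<forall>x\<in>{a..<c}. 0 < h x)"
proof -
  define S where "S = h -` {..0} \<inter> {a..b}"
  have "closed S"
    unfolding S_def by (rule closed_vimage_Int[OF closed_atMost cont closed_atLeastAtMost])
  then have "compact ({a..b} \<inter> S)" by (rule compact_Int_closed[OF compact_Icc])
  moreover have "{a..b} \<inter> S = S" by (auto simp: S_def)
  ultimately have "compact S" by simp
  moreover have "b \<in> S" using \<open>a \<le> b\<close> hb by (simp add: S_def)
  ultimately obtain c where "c \<in> S" and c_least: "\<And>x. x \<in> S \<Longrightarrow> c \<le> x"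
    using compact_attains_inf[of S] by auto
  then have c: "a \<le> c" "c \<le> b" "h c \<le> 0" by (auto simp: S_def)
  have before: "0 < h x" if "a \<le> x" "x < c" for x
  proof (rule ccontr)
    assume "\<not> 0 < h x"
    then have "x \<in> S" using that c by (simp add: S_def)
    then show False using c_least[of x] \<open>x < c\<close> by simp
  qed
  have "h c = 0"
  proof (rule ccontr)
    assume "h c \<noteq> 0"
    then have "h c < 0" using c by simp
    then obtain x where "a \<le> x" "x \<le> c" "h x = 0"
      using IVT2'[of h c 0 a] c ha continuous_on_subset[OF cont, of "{a..c}"] by auto
    then show False using before[of x] \<open>h c < 0\<close> by (cases "x = c") auto
  qed
  moreover have "a \<noteq> c" using ha c by auto
  ultimately show ?thesis using c before by auto
qed

lemma eventually_powr_less: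
  fixes a c :: real
  assumes "0 < a" "0 < c"
  shows "\<forall>\<^sub>F t in at_right 0. t powr a < c"
proof -
  have "\<forall>\<^sub>F t in at_right 0. 0 \<le> (t::real)"
    using eventually_at_right_less by (rule eventually_mono) simp
  then have "((\<lambda>t. t powr a) \<longlongrightarrow> 0) (at_right 0)"
    using assms(1) by (intro tendsto_zero_powrI[OF tendsto_ident_at tendsto_const])
  then show ?thesis using assms(2) by (rule order_tendstoD(2))
qed

lemma abs_sum_perturbed_le:
  fixes c d :: "'a \<Rightarrow> real"
  assumes "finite I" "k \<in> I" "c k = 1" "0 \<le> \<delta>" "\<And>i. i \<in> I \<Longrightarrow> i \<noteq> k \<Longrightarrow> \<bar>c i\<bar> \<le> \<delta>"
  shows "\<bar>(\<Sum>i\<in>I. c i * d i) - d k\<bar> \<le> \<delta> * (\<Sum>i\<in>I. \<bar>d i\<bar>)"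
proof -
  have "\<bar>(\<Sum>i\<in>I. c i * d i) - d k\<bar> = \<bar>\<Sum>i\<in>I - {k}. c i * d i\<bar>"
    using assms(1-3) by (simp add: sum.remove)
  also have "\<dots> \<le> (\<Sum>i\<in>I - {k}. \<bar>c i\<bar> * \<bar>d i\<bar>)"
    using sum_abs[of "\<lambda>i. c i * d i"] by (simp add: abs_mult)
  also have "\<dots> \<le> (\<Sum>i\<in>I - {k}. \<delta> * \<bar>d i\<bar>)"
    using assms(5) by (intro sum_mono mult_right_mono) auto
  also have "\<dots> \<le> (\<Sum>i\<in>I. \<delta> * \<bar>d i\<bar>)"
    using assms(1,4) by (intro sum_mono2) auto
  finally show ?thesis by (simp add: sum_distrib_left)
qed

lemma frac_one_plus_le:
  fixes q t \<eta> :: real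
  assumes "0 \<le> q" "q \<le> t + \<eta>" "0 \<le> t" "0 \<le> \<eta>"
  shows "q / (1 + q) \<le> t / (1 + t) + \<eta>"
proof -
  have "q / (1 + q) - t / (1 + t) = (q - t) / ((1 + q) * (1 + t))"
    using assms by (simp add: field_simps)
  also have "\<dots> \<le> max 0 (q - t)"
  proof (cases "q \<le> t")
    case True
    then show ?thesis using assms by (simp add: divide_nonpos_pos)
  next
    case False
    have "1 \<le> (1 + q) * (1 + t)" using assms by (simp add: algebra_simps)
    then have "(q - t) / ((1 + q) * (1 + t)) \<le> (q - t) / 1"
      using False by (intro divide_left_mono) auto
    then show ?thesis by simp
  qed
  finally show ?thesis using assms by linarith
qed

section \<open>The reduced equation\<close>

text \<open>\<open>X z\<close> and \<open>F z\<close> are the values of \<open>s\<^sub>0\<close> and \<open>f\<close> forced by the conservation laws for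
  \<open>E\<close> and \<open>F\<close> when \<open>e = z f\<close>; \<open>g z = 0\<close> is then the conservation law for \<open>S\<close>.\<close>

locale reduced_system =
  fixes Stot Etot Ftot :: real and A B P :: "real \<Rightarrow> real"
  assumes Stot_pos: "0 < Stot" and Etot_pos: "0 < Etot" and Ftot_pos: "0 < Ftot"
    and continuous_A: "continuous_on UNIV A" and continuous_B: "continuous_on UNIV B"
    and continuous_P: "continuous_on UNIV P"
    and A_pos: "0 < z \<Longrightarrow> 0 < A z" and B_pos: "0 < z \<Longrightarrow> 0 < B z"
    and P_pos: "0 < z \<Longrightarrow> 0 < P z"
begin

definition N :: "real \<Rightarrow> real" where "N z = Ftot * z - Etot"
definition D :: "real \<Rightarrow> real" where "D z = Etot * B z - Ftot * z * A z"
definition X :: "real \<Rightarrow> real" where "X z = N z / D z"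
definition F :: "real \<Rightarrow> real" where "F z = Ftot / (1 + X z * B z)"
definition g :: "real \<Rightarrow> real" where "g z = X z * P z - z * F z - F z + Etot + Ftot - Stot"

definition positive_root :: "real \<Rightarrow> bool" where
  "positive_root z \<longleftrightarrow> 0 < z \<and> 0 < N z \<and> 0 < D z \<and> g z = 0"

lemma N_mono: "z \<le> z' \<Longrightarrow> N z \<le> N z'"
  using Ftot_pos by (simp add: N_def)

lemma steady_values:
  assumes "0 < z" "0 < N z" "0 < D z"
  shows "0 < X z" and "0 < F z" and "F z < Ftot" and "z * F z < Etot"
    and "F z * (1 + X z * B z) = Ftot" and "z * F z * (1 + X z * A z) = Etot"
proof -
  show X_pos: "0 < X z" using assms by (simp add: X_def)
  have AB: "0 < A z" "0 < B z" using assms A_pos B_pos by auto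
  have XB: "0 < X z * B z" and XA: "0 < X z * A z" using X_pos AB by simp_all
  show F_eq: "F z * (1 + X z * B z) = Ftot" using XB by (simp add: F_def)
  have "X z * D z = N z" using assms by (simp add: X_def)
  then have "Etot * (1 + X z * B z) = Ftot * z * (1 + X z * A z)"
    by (simp add: D_def N_def algebra_simps)
  then show zF_eq: "z * F z * (1 + X z * A z) = Etot"
    using XB by (simp add: F_def field_simps)
  show "0 < F z" using XB Ftot_pos by (simp add: F_def)
  have "0 < F z * (X z * B z)" using XB \<open>0 < F z\<close> by simp
  then show "F z < Ftot" using F_eq by (simp add: algebra_simps)
  have "0 < z * F z * (X z * A z)" using XA \<open>0 < F z\<close> assms(1) by simp
  then show "z * F z < Etot" using zF_eq by (simp add: algebra_simps)
qed

lemma continuous_N: "continuous_on UNIV N" and continuous_D: "continuous_on UNIV D"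
  unfolding N_def[abs_def] D_def[abs_def]
  by (intro continuous_intros continuous_A continuous_B)+

lemma continuous_on_g:
  assumes "\<And>z. z \<in> {a..b} \<Longrightarrow> 0 < z \<and> 0 < N z \<and> 0 < D z"
  shows "continuous_on {a..b} g"
proof -
  have on_ab: "continuous_on {a..b} h" if "continuous_on UNIV h" for h :: "real \<Rightarrow> real"
    using continuous_on_subset[OF that] by blast
  have "\<forall>z\<in>{a..b}. D z \<noteq> 0" using assms by fastforce
  then have cont_X: "continuous_on {a..b} X"
    unfolding X_def[abs_def] by (intro continuous_on_divide on_ab continuous_N continuous_D)
  have "\<forall>z\<in>{a..b}. 1 + X z * B z \<noteq> 0"
  proof
    fix z assume "z \<in> {a..b}"
    then show "1 + X z * B z \<noteq> 0" using assms steady_values(5)[of z] Ftot_pos by force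
  qed
  then have cont_F: "continuous_on {a..b} F"
    unfolding F_def[abs_def] by (intro continuous_intros cont_X on_ab continuous_B)
  show ?thesis
    unfolding g_def[abs_def] by (intro continuous_intros cont_X cont_F on_ab[OF continuous_P])
qed

text \<open>The sign of \<open>Stot * D - N * P\<close> is that of \<open>Stot - X * P\<close> while \<open>D > 0\<close>; at its first zero
  \<open>zh\<close> beyond \<open>z2\<close> we still have \<open>D zh > 0\<close> and \<open>X zh * P zh = Stot\<close>, which makes \<open>g zh\<close> positive.\<close>

lemma positive_root_beyond:
  assumes z2: "0 < z2" "0 < N z2" "0 < D z2" and g_z2: "g z2 < 0"
    and beyond: "z2 < z'" "Stot * D z' < N z' * P z'"
  shows "\<exists>zb>z2. positive_root zb"
proof -
  have N_pos: "0 < z \<and> 0 < N z" if "z2 \<le> z" for z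
    using N_mono[OF that] z2 that by auto
  define h where "h z = Stot * D z - N z * P z" for z
  have "continuous_on {z2..z'} h"
    unfolding h_def[abs_def] using continuous_D continuous_N continuous_P
    by (intro continuous_intros) (auto intro: continuous_on_subset)
  moreover have "0 < h z2"
  proof -
    have "z2 * F z2 < Etot" "F z2 < Ftot" using steady_values(3,4)[OF z2] by auto
    then have "X z2 * P z2 < Stot" using g_z2 by (simp add: g_def)
    then show ?thesis using z2(3) by (simp add: h_def X_def field_simps)
  qed
  ultimately obtain zh where zh: "z2 < zh" "zh \<le> z'" "h zh = 0"
    and h_pos: "\<And>x. z2 \<le> x \<Longrightarrow> x < zh \<Longrightarrow> 0 < h x"
    using first_zero_crossing[of z2 z' h] beyond by (auto simp: h_def)
  have D_pos: "0 < D z" if "z2 \<le> z" "z \<le> zh" for z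
  proof -
    have "0 \<le> h z" using h_pos[of z] zh that by (cases "z = zh") auto
    moreover have "0 < N z * P z" using N_pos[of z] P_pos[of z] that by simp
    ultimately have "0 < Stot * D z" by (simp add: h_def)
    then show ?thesis using Stot_pos by (simp add: zero_less_mult_iff)
  qed
  have "0 < g zh"
  proof -
    have D_zh: "0 < D zh" using D_pos zh by simp
    have "X zh * P zh = Stot" using zh(3) D_zh by (simp add: h_def X_def field_simps)
    moreover have "zh * F zh < Etot" "F zh < Ftot"
      using steady_values(3,4)[of zh] N_pos[of zh] D_zh zh by auto
    ultimately show ?thesis by (simp add: g_def)
  qed
  moreover have "continuous_on {z2..zh} g"
    by (rule continuous_on_g) (use N_pos D_pos in auto)
  ultimately obtain zb where zb: "z2 \<le> zb" "zb \<le> zh" "g zb = 0"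
    using IVT'[of g z2 0 zh] g_z2 zh by auto
  then have "z2 < zb" using g_z2 by (cases "zb = z2") auto
  moreover have "positive_root zb"
    using zb N_pos[of zb] D_pos[of zb] by (simp add: positive_root_def)
  ultimately show ?thesis by blast
qed

lemma two_positive_roots:
  assumes z12: "0 < z1" "z1 < z2" and N_z1: "0 < N z1"
    and D_pos: "\<And>z. z \<in> {z1..z2} \<Longrightarrow> 0 < D z"
    and g_z1: "0 < g z1" and g_z2: "g z2 < 0"
    and beyond: "z2 < z'" "Stot * D z' < N z' * P z'"
  shows "\<exists>za zb. za \<noteq> zb \<and> positive_root za \<and> positive_root zb"
proof -
  have N_pos: "0 < z \<and> 0 < N z" if "z1 \<le> z" for z
    using N_mono[OF that] N_z1 z12 that by auto
  have "continuous_on {z1..z2} g"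
    by (rule continuous_on_g) (use N_pos D_pos in auto)
  then obtain za where za: "z1 \<le> za" "za \<le> z2" "g za = 0"
    using IVT2'[of g z2 0 z1] g_z1 g_z2 z12 by auto
  then have "positive_root za" using N_pos D_pos by (simp add: positive_root_def)
  moreover obtain zb where "z2 < zb" "positive_root zb"
    using positive_root_beyond[OF _ _ _ g_z2 beyond] N_pos[of z2] D_pos[of z2] z12 by auto
  ultimately show ?thesis using za(2) by (intro exI[of _ za] exI[of _ zb]) auto
qed

end

section \<open>Steady states of the rescaled network\<close>

definition K_ratio :: "rates \<Rightarrow> nat \<Rightarrow> real" where
  "K_ratio r i = kon r i / (koff r i + kcat r i)"

definition L_ratio :: "rates \<Rightarrow> nat \<Rightarrow> real" where
  "L_ratio r i = lon r i / (loff r i + lcat r i)"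

definition tau :: "rates \<Rightarrow> nat \<Rightarrow> real" where
  "tau r i = kcat r i * K_ratio r i / (lcat r i * L_ratio r i)"

definition tau_prod :: "rates \<Rightarrow> nat \<Rightarrow> real" where
  "tau_prod r i = (\<Prod>j<i. tau r j)"

lemma tau_prod_0 [simp]: "tau_prod r 0 = 1"
  and tau_prod_Suc: "tau_prod r (Suc i) = tau_prod r i * tau r i"
  by (simp_all add: tau_prod_def)

context
  fixes n :: nat and r :: rates
  assumes rates_pos: "pos_rates n r"
begin

lemma K_ratio_pos: "i < n \<Longrightarrow> 0 < K_ratio r i"
  and L_ratio_pos: "i < n \<Longrightarrow> 0 < L_ratio r i"
  using rates_pos by (simp_all add: pos_rates_def K_ratio_def L_ratio_def add_pos_pos)

lemma tau_pos: "i < n \<Longrightarrow> 0 < tau r i"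
  using rates_pos K_ratio_pos L_ratio_pos by (simp add: pos_rates_def tau_def)

lemma tau_prod_pos: "i \<le> n \<Longrightarrow> 0 < tau_prod r i"
  unfolding tau_prod_def using tau_pos by (intro prod_pos) auto

lemma lcat_L_ratio_tau:
  assumes "i < n" shows "lcat r i * L_ratio r i * tau r i = kcat r i * K_ratio r i"
proof -
  have "0 < lcat r i" "0 < L_ratio r i" using assms rates_pos L_ratio_pos by (auto simp: pos_rates_def)
  then show ?thesis by (simp add: tau_def)
qed

end

lemma is_steadyI:
  assumes "1 \<le> n"
    and bind_E: "\<And>i. i < n \<Longrightarrow> kon r i * s i * e = (koff r i + kcat r i) * y i"
    and bind_F: "\<And>i. i < n \<Longrightarrow> lon r i * s (Suc i) * f = (loff r i + lcat r i) * u i"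
    and balance: "\<And>i. i < n \<Longrightarrow> kcat r i * y i = lcat r i * u i"
  shows "is_steady n r s y u e f"
proof -
  have middle: "\<forall>i. 1 \<le> i \<and> i \<le> n - 1 \<longrightarrow>
      kcat r (i - 1) * y (i - 1) - kon r i * s i * e + koff r i * y i + lcat r i * u i
      - lon r (i - 1) * s i * f + loff r (i - 1) * u (i - 1) = 0" (is "\<forall>i. _ \<longrightarrow> ?E i = 0")
  proof (intro allI impI)
    fix i assume "1 \<le> i \<and> i \<le> n - 1"
    then have "i < n" "i - 1 < n" "Suc (i - 1) = i" by auto
    then show "?E i = 0"
      using bind_E[of i] balance[of i] bind_F[of "i - 1"] balance[of "i - 1"]
      by (simp add: algebra_simps)
  qed
  have "n - 1 < n" "Suc (n - 1) = n" using \<open>1 \<le> n\<close> by auto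
  then have last: "kcat r (n - 1) * y (n - 1) - lon r (n - 1) * s n * f + loff r (n - 1) * u (n - 1) = 0"
    using bind_F[of "n - 1"] balance[of "n - 1"] by (simp add: algebra_simps)
  have first: "- kon r 0 * s 0 * e + koff r 0 * y 0 + lcat r 0 * u 0 = 0"
    using bind_E[of 0] balance[of 0] \<open>1 \<le> n\<close> by (simp add: algebra_simps)
  show ?thesis
    unfolding is_steady_def using first middle last bind_E bind_F by simp
qed

text \<open>With \<open>\<gamma>\<^sub>0 = 1\<close> the rescaling of \<open>kon\<^sub>0\<close> becomes the case \<open>i = 0\<close> of that of \<open>kon\<^sub>i\<close>.\<close>

definition weight :: "(nat \<Rightarrow> real) \<Rightarrow> nat \<Rightarrow> real" where
  "weight \<gamma> i = (if i = 0 then 1 else \<gamma> i)"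

definition rescale :: "nat \<Rightarrow> rates \<Rightarrow> (nat \<Rightarrow> real) \<Rightarrow> rates" where
  "rescale n r \<gamma> = r\<lparr>kon := (\<lambda>i. if i = 0 then \<gamma> (n+1) * kon r 0 else \<gamma> (n+1+i) / \<gamma> i * kon r i),
                     lon := (\<lambda>i. \<gamma> (n+1+i) / \<gamma> (i+1) * lon r i)\<rparr>"

lemma kon_rescale: "kon (rescale n r \<gamma>) i = \<gamma> (n+1+i) / weight \<gamma> i * kon r i"
  and lon_rescale: "lon (rescale n r \<gamma>) i = \<gamma> (n+1+i) / weight \<gamma> (Suc i) * lon r i"
  by (simp_all add: rescale_def weight_def)

lemma rescale_unchanged [simp]:
  "koff (rescale n r \<gamma>) = koff r" "kcat (rescale n r \<gamma>) = kcat r"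
  "loff (rescale n r \<gamma>) = loff r" "lcat (rescale n r \<gamma>) = lcat r"
  by (simp_all add: rescale_def)

lemma rescale_powr:
  "rescale n r (\<lambda>j. t powr h (j+3)) =
    r\<lparr>kon := (\<lambda>i. if i = 0 then t powr h (n+4) * kon r 0 else t powr (h (n+4+i) - h (i+3)) * kon r i),
      lon := (\<lambda>i. t powr (h (n+4+i) - h (i+4)) * lon r i)\<rparr>"
  unfolding rescale_def
  by (intro arg_cong2[where f = "\<lambda>a b. r\<lparr>kon := a, lon := b\<rparr>"] ext) (simp_all add: powr_diff ac_simps)

lemma pos_rates_rescale:
  assumes "pos_rates n r" "\<And>i. 0 < \<gamma> i"
  shows "pos_rates n (rescale n r \<gamma>)"
  using assms by (simp add: pos_rates_def rescale_def)

definition A_poly :: "nat \<Rightarrow> rates \<Rightarrow> (nat \<Rightarrow> real) \<Rightarrow> real \<Rightarrow> real" where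
  "A_poly n r \<gamma> z = (\<Sum>i<n. \<gamma> (n+1+i) * K_ratio r i * tau_prod r i * z^i)"

definition B_poly :: "nat \<Rightarrow> rates \<Rightarrow> (nat \<Rightarrow> real) \<Rightarrow> real \<Rightarrow> real" where
  "B_poly n r \<gamma> z = (\<Sum>i<n. \<gamma> (n+1+i) * L_ratio r i * tau_prod r (Suc i) * z^Suc i)"

definition P_poly :: "nat \<Rightarrow> rates \<Rightarrow> (nat \<Rightarrow> real) \<Rightarrow> real \<Rightarrow> real" where
  "P_poly n r \<gamma> z = (\<Sum>i\<le>n. weight \<gamma> i * tau_prod r i * z^i)"

locale rescaled_network =
  fixes n :: nat and r :: rates and \<gamma> :: "nat \<Rightarrow> real" and Stot Etot Ftot :: real
  assumes n_pos: "1 \<le> n" and rates_pos: "pos_rates n r" and \<gamma>_pos: "\<forall>i\<in>{1..2*n}. 0 < \<gamma> i"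
    and Stot_pos: "0 < Stot" and Etot_pos: "0 < Etot" and Ftot_pos: "0 < Ftot"
begin

lemma gamma_coeff_pos: "i < n \<Longrightarrow> 0 < \<gamma> (n+1+i)"
  using \<gamma>_pos by simp

lemma weight_pos: "i \<le> n \<Longrightarrow> 0 < weight \<gamma> i"
  using \<gamma>_pos n_pos by (simp add: weight_def)

lemma A_poly_pos: "0 < z \<Longrightarrow> 0 < A_poly n r \<gamma> z"
  and B_poly_pos: "0 < z \<Longrightarrow> 0 < B_poly n r \<gamma> z"
  unfolding A_poly_def B_poly_def using n_pos gamma_coeff_pos
    K_ratio_pos[OF rates_pos] L_ratio_pos[OF rates_pos] tau_prod_pos[OF rates_pos]
  by (auto intro!: sum_pos simp: lessThan_empty_iff)

lemma P_poly_ge_term: "0 \<le> z \<Longrightarrow> i \<le> n \<Longrightarrow> weight \<gamma> i * tau_prod r i * z^i \<le> P_poly n r \<gamma> z"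
  unfolding P_poly_def using weight_pos tau_prod_pos[OF rates_pos]
  by (intro member_le_sum) (auto simp: less_imp_le)

lemma P_poly_ge_1: "0 \<le> z \<Longrightarrow> 1 \<le> P_poly n r \<gamma> z"
  using P_poly_ge_term[of z 0] by (simp add: weight_def)

sublocale reduced_system Stot Etot Ftot "A_poly n r \<gamma>" "B_poly n r \<gamma>" "P_poly n r \<gamma>"
proof
  show "continuous_on UNIV (A_poly n r \<gamma>)" "continuous_on UNIV (B_poly n r \<gamma>)"
    "continuous_on UNIV (P_poly n r \<gamma>)"
    unfolding A_poly_def[abs_def] B_poly_def[abs_def] P_poly_def[abs_def]
    by (intro continuous_intros)+
  show "0 < z \<Longrightarrow> 0 < P_poly n r \<gamma> z" for z
    using P_poly_ge_1[of z] by simp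
qed (use Stot_pos Etot_pos Ftot_pos A_poly_pos B_poly_pos in auto)

lemma steady_state_of_totals:
  assumes pos: "0 < x" "0 < f" "0 < z"
    and Stot_eq: "x * P_poly n r \<gamma> z + x * (z * f) * A_poly n r \<gamma> z + x * f * B_poly n r \<gamma> z = Stot"
    and Etot_eq: "z * f * (1 + x * A_poly n r \<gamma> z) = Etot"
    and Ftot_eq: "f * (1 + x * B_poly n r \<gamma> z) = Ftot"
  shows "\<exists>s y u. positive_point n s y u (z * f) f \<and> is_steady n (rescale n r \<gamma>) s y u (z * f) f
           \<and> conserved n Stot Etot Ftot s y u (z * f) f"
proof (intro exI conjI)
  define s where "s i = x * weight \<gamma> i * tau_prod r i * z^i" for i
  define y where "y i = \<gamma> (n+1+i) * K_ratio r i * tau_prod r i * x * z^i * (z * f)" for i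
  define u where "u i = \<gamma> (n+1+i) * L_ratio r i * tau_prod r (Suc i) * x * z^Suc i * f" for i
  show "positive_point n s y u (z * f) f"
    unfolding positive_point_def s_def y_def u_def
    using pos weight_pos gamma_coeff_pos K_ratio_pos[OF rates_pos] L_ratio_pos[OF rates_pos]
      tau_prod_pos[OF rates_pos]
    by simp
  show "is_steady n (rescale n r \<gamma>) s y u (z * f) f"
  proof (rule is_steadyI[OF n_pos])
    fix i assume "i < n"
    then have w: "0 < weight \<gamma> i" "0 < weight \<gamma> (Suc i)" and
      KL: "(koff r i + kcat r i) * K_ratio r i = kon r i" "(loff r i + lcat r i) * L_ratio r i = lon r i"
      using weight_pos rates_pos by (auto simp: pos_rates_def K_ratio_def L_ratio_def)
    show "kon (rescale n r \<gamma>) i * s i * (z * f) = (koff (rescale n r \<gamma>) i + kcat (rescale n r \<gamma>) i) * y i"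
      unfolding kon_rescale s_def y_def using w KL(1)[symmetric] by (simp add: field_simps)
    show "lon (rescale n r \<gamma>) i * s (Suc i) * f = (loff (rescale n r \<gamma>) i + lcat (rescale n r \<gamma>) i) * u i"
      unfolding lon_rescale s_def u_def using w KL(2)[symmetric] by (simp add: field_simps)
    show "kcat (rescale n r \<gamma>) i * y i = lcat (rescale n r \<gamma>) i * u i"
      using lcat_L_ratio_tau[OF rates_pos \<open>i < n\<close>, symmetric]
      by (simp add: y_def u_def tau_prod_Suc algebra_simps)
  qed
  have "(\<Sum>i\<le>n. s i) = x * P_poly n r \<gamma> z" "(\<Sum>i<n. y i) = x * (z * f) * A_poly n r \<gamma> z"
    "(\<Sum>i<n. u i) = x * f * B_poly n r \<gamma> z"
    unfolding s_def y_def u_def P_poly_def A_poly_def B_poly_def sum_distrib_left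
    by (simp_all add: algebra_simps)
  then show "conserved n Stot Etot Ftot s y u (z * f) f"
    unfolding conserved_def using Stot_eq Etot_eq Ftot_eq by (simp add: algebra_simps)
qed

lemma steady_state_of_root:
  assumes "positive_root z"
  shows "\<exists>s y u. positive_point n s y u (z * F z) (F z) \<and> is_steady n (rescale n r \<gamma>) s y u (z * F z) (F z)
           \<and> conserved n Stot Etot Ftot s y u (z * F z) (F z)"
proof (rule steady_state_of_totals)
  have z: "0 < z" "0 < N z" "0 < D z" "g z = 0" using assms by (simp_all add: positive_root_def)
  note root = steady_values[OF z(1-3)]
  show "0 < X z" "0 < F z" "0 < z" using root z by simp_all
  show "z * F z * (1 + X z * A_poly n r \<gamma> z) = Etot" "F z * (1 + X z * B_poly n r \<gamma> z) = Ftot"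
    using root by simp_all
  then show "X z * P_poly n r \<gamma> z + X z * (z * F z) * A_poly n r \<gamma> z + X z * F z * B_poly n r \<gamma> z = Stot"
    using z(4) by (simp add: g_def algebra_simps)
qed

lemma multistationary_of_two_roots:
  assumes "za \<noteq> zb" "positive_root za" "positive_root zb"
  shows "multistationary n (rescale n r \<gamma>) Stot Etot Ftot"
proof -
  obtain s1 y1 u1 s2 y2 u2 where
    "positive_point n s1 y1 u1 (za * F za) (F za)" "is_steady n (rescale n r \<gamma>) s1 y1 u1 (za * F za) (F za)"
    "conserved n Stot Etot Ftot s1 y1 u1 (za * F za) (F za)"
    "positive_point n s2 y2 u2 (zb * F zb) (F zb)" "is_steady n (rescale n r \<gamma>) s2 y2 u2 (zb * F zb) (F zb)"
    "conserved n Stot Etot Ftot s2 y2 u2 (zb * F zb) (F zb)"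
    using steady_state_of_root[OF assms(2)] steady_state_of_root[OF assms(3)] by blast
  moreover have "za * F za \<noteq> zb * F zb \<or> F za \<noteq> F zb"
    using assms steady_values(2)[of za] by (auto simp: positive_root_def)
  ultimately show ?thesis
    unfolding multistationary_def by blast
qed

lemma B_poly_le_top_degree:
  assumes "1 \<le> z"
  shows "B_poly n r \<gamma> z \<le> (\<Sum>i<n. \<gamma> (n+1+i) * L_ratio r i * tau_prod r (Suc i)) * z^n"
  unfolding B_poly_def sum_distrib_right
proof (rule sum_mono)
  fix i assume "i \<in> {..<n}"
  then have "0 \<le> \<gamma> (n+1+i) * L_ratio r i * tau_prod r (Suc i)"
    using gamma_coeff_pos L_ratio_pos[OF rates_pos] tau_prod_pos[OF rates_pos] by (simp add: less_imp_le)
  moreover have "z^Suc i \<le> z^n" using \<open>i \<in> {..<n}\<close> assms by (intro power_increasing) auto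
  ultimately
  show "\<gamma> (n+1+i) * L_ratio r i * tau_prod r (Suc i) * z^Suc i
      \<le> \<gamma> (n+1+i) * L_ratio r i * tau_prod r (Suc i) * z^n"
    by (rule mult_left_mono[rotated])
qed

lemma P_dominates_D: "\<exists>z'>z0. Stot * D z' < N z' * P_poly n r \<gamma> z'"
proof -
  define b where "b = (\<Sum>i<n. \<gamma> (n+1+i) * L_ratio r i * tau_prod r (Suc i))"
  define p where "p = weight \<gamma> n * tau_prod r n"
  have "0 \<le> b" unfolding b_def using gamma_coeff_pos L_ratio_pos[OF rates_pos] tau_prod_pos[OF rates_pos]
    by (intro sum_nonneg) (simp add: less_imp_le)
  have "0 < p" unfolding p_def using weight_pos tau_prod_pos[OF rates_pos] by simp
  define c where "c = Stot * Etot * b / p"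
  have "0 \<le> c" unfolding c_def using \<open>0 \<le> b\<close> \<open>0 < p\<close> Stot_pos Etot_pos by simp
  obtain z' where "max (max z0 1) ((c + Etot) / Ftot) < z'" using gt_ex by blast
  then have z': "z0 < z'" "1 \<le> z'" "c < N z'" using Ftot_pos by (auto simp: N_def field_simps)
  have "Stot * D z' \<le> Stot * (Etot * (b * z'^n))"
  proof -
    have "0 < Ftot * z' * A_poly n r \<gamma> z'" using A_poly_pos Ftot_pos z' by simp
    moreover have "Etot * B_poly n r \<gamma> z' \<le> Etot * (b * z'^n)"
      using B_poly_le_top_degree[OF z'(2)] Etot_pos unfolding b_def by simp
    ultimately show ?thesis using Stot_pos by (simp add: D_def)
  qed
  also have "\<dots> = c * (p * z'^n)" using \<open>0 < p\<close> by (simp add: c_def)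
  also have "\<dots> < N z' * (p * z'^n)" using z' \<open>0 < p\<close> by simp
  also have "\<dots> \<le> N z' * P_poly n r \<gamma> z'"
    using P_poly_ge_term[of z' n] z' \<open>0 \<le> c\<close> unfolding p_def by simp
  finally show ?thesis using z' by blast
qed

lemma multistationary_of_sign_change:
  assumes "0 < z1" "z1 < z2" "0 < N z1" "\<And>z. z \<in> {z1..z2} \<Longrightarrow> 0 < D z" "0 < g z1" "g z2 < 0"
  shows "multistationary n (rescale n r \<gamma>) Stot Etot Ftot"
proof -
  obtain z' where "z2 < z'" "Stot * D z' < N z' * P_poly n r \<gamma> z'"
    using P_dominates_D by blast
  then obtain za zb where "za \<noteq> zb" "positive_root za" "positive_root zb"
    using two_positive_roots[OF assms] by blast
  then show ?thesis by (rule multistationary_of_two_roots)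
qed

end

section \<open>Admissible rescalings\<close>

definition D_coeff :: "rates \<Rightarrow> real \<Rightarrow> real \<Rightarrow> nat \<Rightarrow> real" where
  "D_coeff r Etot Ftot i = tau_prod r i * (Etot * L_ratio r i * tau r i - Ftot * K_ratio r i)"

lemma scaled_D_expansion:
  assumes "0 < \<epsilon>"
  shows "\<epsilon> * (Etot * B_poly n r \<gamma> (w/\<epsilon>) - Ftot * (w/\<epsilon>) * A_poly n r \<gamma> (w/\<epsilon>))
     = (\<Sum>i<n. \<gamma> (n+1+i) / \<epsilon>^i * (D_coeff r Etot Ftot i * w^Suc i))"
  unfolding B_poly_def A_poly_def sum_distrib_left sum_subtractf[symmetric]
  by (rule sum.cong) (use assms in \<open>simp_all add: D_coeff_def tau_prod_Suc power_divide field_simps\<close>)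

lemma scaled_A_expansion:
  assumes "0 < \<epsilon>"
  shows "\<epsilon> * (w/\<epsilon>) * A_poly n r \<gamma> (w/\<epsilon>) = (\<Sum>i<n. \<gamma> (n+1+i) / \<epsilon>^i * (K_ratio r i * tau_prod r i * w^Suc i))"
  unfolding A_poly_def sum_distrib_left
  by (rule sum.cong) (use assms in \<open>simp_all add: power_divide field_simps\<close>)

lemma scaled_P_expansion:
  assumes "0 < \<epsilon>"
  shows "P_poly n r \<gamma> (w/\<epsilon>) = (\<Sum>i\<le>n. weight \<gamma> i / \<epsilon>^i * (tau_prod r i * w^i))"
  unfolding P_poly_def
  by (rule sum.cong) (use assms in \<open>simp_all add: power_divide field_simps\<close>)

definition admissible_rescaling :: "nat \<Rightarrow> (nat \<Rightarrow> real) \<Rightarrow> (nat \<Rightarrow> real) \<Rightarrow> bool" where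
  "admissible_rescaling n M \<gamma> \<longleftrightarrow>
     (\<forall>i\<in>{1..2*n}. 0 < \<gamma> i) \<and> (\<forall>i\<in>{1..2*n}. \<gamma> i < M i) \<and>
     (\<forall>i\<in>{1..n}. \<gamma> i / \<gamma> (n+2) ^ i < M (2*n+i)) \<and>
     (\<forall>i\<in>{3..n}. \<gamma> (n+i) / \<gamma> (n+2) ^ (i-1) < M (3*n-2+i))"

lemma eventually_admissible_powr:
  fixes h :: "nat \<Rightarrow> real"
  assumes two_le_n: "2 \<le> n" and M_pos: "\<forall>i\<in>{1..4*n-2}. 0 < M i"
    and h_pos: "\<forall>i\<in>{4..2*n+3}. 0 < h i"
    and h_lo: "\<forall>i\<in>{1..n}. real i * h (n+5) < h (i+3)"
    and h_hi: "\<forall>i\<in>{1..n}. i \<noteq> 2 \<longrightarrow> (real i - 1) * h (n+5) < h (n+i+3)"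
  shows "\<forall>\<^sub>F t in at_right 0. admissible_rescaling n M (\<lambda>j. t powr h (j+3))"
proof -
  have M_pos_1: "0 < M i" if "i \<in> {1..2*n}" for i
    using M_pos that two_le_n by auto
  have M_pos_2: "0 < M (2*n+i)" if "i \<in> {1..n}" for i
    using M_pos that two_le_n by auto
  have M_pos_3: "0 < M (3*n-2+i)" if "i \<in> {3..n}" for i
  proof -
    have "3*n-2+i \<in> {1..4*n-2}" using that by auto
    then show ?thesis using M_pos by blast
  qed
  have "\<forall>\<^sub>F t in at_right 0. 0 < t \<and> (\<forall>i\<in>{1..2*n}. t powr h (i+3) < M i)
      \<and> (\<forall>i\<in>{1..n}. t powr (h (i+3) - real i * h (n+5)) < M (2*n+i))
      \<and> (\<forall>i\<in>{3..n}. t powr (h (n+i+3) - real (i-1) * h (n+5)) < M (3*n-2+i))"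
    using h_pos h_lo h_hi M_pos_1 M_pos_2 M_pos_3
    by (intro eventually_conj eventually_at_right_less eventually_ball_finite ballI eventually_powr_less)
      (auto simp: of_nat_diff)
  then show ?thesis
  proof (rule eventually_mono)
    fix t :: real
    assume t: "0 < t \<and> (\<forall>i\<in>{1..2*n}. t powr h (i+3) < M i)
      \<and> (\<forall>i\<in>{1..n}. t powr (h (i+3) - real i * h (n+5)) < M (2*n+i))
      \<and> (\<forall>i\<in>{3..n}. t powr (h (n+i+3) - real (i-1) * h (n+5)) < M (3*n-2+i))"
    have "(t powr h (n+2+3)) ^ k = t powr (real k * h (n+5))" for k
      using t by (simp add: powr_power add.commute)
    then show "admissible_rescaling n M (\<lambda>j. t powr h (j+3))"
      using t by (simp add: admissible_rescaling_def powr_diff add.assoc)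
  qed
qed

locale multistationarity_regime =
  fixes n :: nat and r :: rates and Stot Etot Ftot :: real
  assumes two_le_n: "2 \<le> n" and rates_pos: "pos_rates n r"
    and Stot_pos: "0 < Stot" and Etot_pos: "0 < Etot" and Ftot_pos: "0 < Ftot"
    and Ftot_less_Stot: "Ftot < Stot"
    and kcat_ratio_large: "max (Ftot / (Stot - Ftot)) (Ftot / Etot) < kcat r 1 / lcat r 1"
begin

definition \<kappa> :: real where "\<kappa> = kcat r 1 / lcat r 1"
definition k1 :: real where "k1 = K_ratio r 1 * tau_prod r 1"
definition c1 :: real where "c1 = D_coeff r Etot Ftot 1"
definition G :: real where "G = Stot - Ftot - Ftot / \<kappa>"
definition t0 :: real where "t0 = Ftot / (Etot * \<kappa> - Ftot)"
definition \<eta> :: real where "\<eta> = G / (4 * Etot)"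
definition w_lo :: real where "w_lo = Ftot / (6 * Stot * c1)"
definition w_hi :: real where "w_hi = 8 * Ftot / (G * c1)"
definition CD :: real where "CD = (\<Sum>i<n. \<bar>D_coeff r Etot Ftot i * w_hi^Suc i\<bar>)"
definition CA :: real where "CA = (\<Sum>i<n. \<bar>K_ratio r i * tau_prod r i * w_hi^Suc i\<bar>)"
definition CP :: real where "CP = (\<Sum>i\<le>n. \<bar>tau_prod r i * w_hi^i\<bar>)"

text \<open>As \<open>\<delta> \<rightarrow> 0\<close>, \<open>\<epsilon> D(w/\<epsilon>) \<rightarrow> c1 w\<^sup>2\<close>, \<open>\<epsilon> z A(w/\<epsilon>) \<rightarrow> k1 w\<^sup>2\<close> and \<open>P(w/\<epsilon>) \<rightarrow> 1\<close>.
  In this limit \<open>X \<ge> 2 Stot\<close> at \<open>w_lo\<close>, \<open>X \<le> G / 4\<close> at \<open>w_hi\<close>, and \<open>X A \<rightarrow> t0\<close> at \<open>w_hi\<close>, where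
  \<open>Etot t0 / (1 + t0) = Ftot / \<kappa>\<close>; \<open>small_radius \<delta>\<close> keeps the errors within the margins.\<close>

definition small_radius :: "real \<Rightarrow> bool" where
  "small_radius \<delta> \<longleftrightarrow> 0 < \<delta> \<and> \<delta> * Etot \<le> Ftot * w_lo / 2 \<and> \<delta> * CD \<le> c1 * w_lo^2 / 2
     \<and> \<delta> * CP \<le> 1 \<and> \<delta> * (Ftot * CA + (t0 + \<eta>) * CD) \<le> \<eta> * c1 * w_hi^2"

lemma kappa_pos: "0 < \<kappa>"
  and Etot_kappa_gt: "Ftot < Etot * \<kappa>"
  and Ftot_div_kappa_lt: "Ftot / \<kappa> < Stot - Ftot"
proof -
  have "0 < kcat r 1" "0 < lcat r 1" using rates_pos two_le_n by (auto simp: pos_rates_def)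
  then show "0 < \<kappa>" by (simp add: \<kappa>_def)
  have "Ftot / Etot < \<kappa>" "Ftot / (Stot - Ftot) < \<kappa>"
    using kcat_ratio_large by (simp_all add: \<kappa>_def)
  then show "Ftot < Etot * \<kappa>" "Ftot / \<kappa> < Stot - Ftot"
    using Etot_pos Ftot_less_Stot \<open>0 < \<kappa>\<close> by (simp_all add: field_simps)
qed

lemma c1_eq: "c1 = k1 * (Etot * \<kappa> - Ftot)"
proof -
  have "0 < lcat r 1" using rates_pos two_le_n by (auto simp: pos_rates_def)
  then have "L_ratio r 1 * tau r 1 = \<kappa> * K_ratio r 1"
    using lcat_L_ratio_tau[OF rates_pos, of 1] two_le_n by (simp add: \<kappa>_def field_simps)
  then show ?thesis by (simp add: c1_def k1_def D_coeff_def algebra_simps)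
qed

lemma c1_pos: "0 < c1"
  using K_ratio_pos[OF rates_pos, of 1] tau_prod_pos[OF rates_pos, of 1] two_le_n Etot_kappa_gt
  by (simp add: k1_def c1_eq)

lemma G_pos: "0 < G" and G_less_Stot: "G < Stot"
proof -
  have "0 < Ftot / \<kappa>" using kappa_pos Ftot_pos by simp
  then show "0 < G" "G < Stot" using Ftot_div_kappa_lt Ftot_pos by (simp_all add: G_def)
qed

lemma t0_nonneg: "0 \<le> t0" and eta_pos: "0 < \<eta>"
  using Etot_kappa_gt Ftot_pos G_pos Etot_pos by (simp_all add: t0_def \<eta>_def)

lemma Ftot_k1_eq: "Ftot * k1 = t0 * c1"
  using Etot_kappa_gt by (simp add: t0_def c1_eq)

lemma Etot_t0_frac: "Etot * (t0 / (1 + t0)) = Ftot / \<kappa>"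
  using Etot_kappa_gt kappa_pos Etot_pos by (simp add: t0_def field_simps)

lemma w_lo_pos: "0 < w_lo" and w_lo_less_w_hi: "w_lo < w_hi"
  using Ftot_pos Stot_pos c1_pos G_pos G_less_Stot by (simp_all add: w_lo_def w_hi_def field_simps)

lemma small_radius_exists: "\<exists>\<delta>. small_radius \<delta>"
proof -
  have CD_CA_CP: "0 \<le> CD" "0 \<le> CA" "0 \<le> CP" by (simp_all add: CD_def CA_def CP_def sum_nonneg)
  have small: "\<forall>\<^sub>F \<delta> in at_right 0. \<delta> * C \<le> b" if "0 < b" for C b :: real
  proof -
    have "((\<lambda>\<delta>. \<delta> * C) \<longlongrightarrow> 0 * C) (at_right 0)" by (intro tendsto_intros)
    then have "\<forall>\<^sub>F \<delta> in at_right 0. \<delta> * C < b" using that by (simp add: order_tendstoD(2))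
    then show ?thesis by (rule eventually_mono) simp
  qed
  have "\<forall>\<^sub>F \<delta> in at_right 0. small_radius \<delta>"
    unfolding small_radius_def
    using w_lo_pos c1_pos eta_pos w_lo_less_w_hi Ftot_pos
    by (intro eventually_conj eventually_at_right_less small) auto
  then show ?thesis by (rule eventually_happens'[OF trivial_limit_at_right_real])
qed

end

locale small_rescaling = multistationarity_regime +
  fixes \<delta> :: real and \<gamma> :: "nat \<Rightarrow> real"
  assumes radius: "small_radius \<delta>" and admissible: "admissible_rescaling n (\<lambda>_. \<delta>) \<gamma>"
begin

definition \<epsilon> :: real where "\<epsilon> = \<gamma> (n+2)"

lemma gamma_pos: "\<forall>i\<in>{1..2*n}. 0 < \<gamma> i"
  using admissible by (simp add: admissible_rescaling_def)

sublocale rescaled_network n r \<gamma> Stot Etot Ftot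
  using two_le_n rates_pos gamma_pos Stot_pos Etot_pos Ftot_pos by unfold_locales auto

lemma delta_pos: "0 < \<delta>"
  using radius by (simp add: small_radius_def)

lemma eps_pos: "0 < \<epsilon>" and eps_less_delta: "\<epsilon> < \<delta>"
  using gamma_pos admissible two_le_n by (auto simp: \<epsilon>_def admissible_rescaling_def)

lemma coeff_ratio_small:
  assumes "i < n" "i \<noteq> 1"
  shows "\<bar>\<gamma> (n+1+i) / \<epsilon>^i\<bar> \<le> \<delta>"
proof (cases "i = 0")
  case True
  have "n + 1 \<in> {1..2*n}" using two_le_n by simp
  then have "0 < \<gamma> (n+1)" "\<gamma> (n+1) < \<delta>"
    using gamma_pos admissible by (auto simp: admissible_rescaling_def)
  then show ?thesis using True by simp
next
  case False
  then have "i + 1 \<in> {3..n}" using assms by auto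
  then have "\<gamma> (n + (i+1)) / \<gamma> (n+2) ^ (i + 1 - 1) < \<delta>"
    using admissible by (simp only: admissible_rescaling_def)
  moreover have "0 < \<gamma> (n+1+i)" using gamma_coeff_pos assms by simp
  ultimately show ?thesis using eps_pos by (simp add: \<epsilon>_def add.commute add.left_commute)
qed

lemma weight_ratio_small:
  assumes "i \<le> n" "i \<noteq> 0"
  shows "\<bar>weight \<gamma> i / \<epsilon>^i\<bar> \<le> \<delta>"
proof -
  have "i \<in> {1..n}" using assms by simp
  then have "\<gamma> i / \<epsilon>^i < \<delta>" using admissible by (simp add: admissible_rescaling_def \<epsilon>_def)
  moreover have "0 < weight \<gamma> i" using weight_pos assms by simp
  ultimately show ?thesis using eps_pos assms by (simp add: weight_def)
qed

lemma coeff_ratio_1: "\<gamma> (n+1+1) / \<epsilon>^1 = 1"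
  using eps_pos by (simp add: \<epsilon>_def)

lemma scaled_D_approx:
  assumes "0 < w" "w \<le> w_hi"
  shows "\<bar>\<epsilon> * D (w/\<epsilon>) - c1 * w^2\<bar> \<le> \<delta> * CD"
proof -
  have "\<bar>(\<Sum>i<n. \<gamma> (n+1+i) / \<epsilon>^i * (D_coeff r Etot Ftot i * w^Suc i)) - D_coeff r Etot Ftot 1 * w^Suc 1\<bar>
      \<le> \<delta> * (\<Sum>i<n. \<bar>D_coeff r Etot Ftot i * w^Suc i\<bar>)"
    by (rule abs_sum_perturbed_le) (use two_le_n coeff_ratio_1 delta_pos coeff_ratio_small in auto)
  also have "\<dots> \<le> \<delta> * CD"
    unfolding CD_def using assms delta_pos
  proof (intro mult_left_mono sum_mono)
    fix i
    have "w^Suc i \<le> w_hi^Suc i" using assms by (intro power_mono) auto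
    then show "\<bar>D_coeff r Etot Ftot i * w^Suc i\<bar> \<le> \<bar>D_coeff r Etot Ftot i * w_hi^Suc i\<bar>"
      using assms by (simp add: abs_mult mult_left_mono)
  qed (use delta_pos in simp)
  finally show ?thesis
    unfolding D_def scaled_D_expansion[OF eps_pos] c1_def by (simp add: power2_eq_square)
qed

lemma scaled_A_approx: "\<bar>\<epsilon> * (w_hi/\<epsilon>) * A_poly n r \<gamma> (w_hi/\<epsilon>) - k1 * w_hi^2\<bar> \<le> \<delta> * CA"
proof -
  have "\<bar>(\<Sum>i<n. \<gamma> (n+1+i) / \<epsilon>^i * (K_ratio r i * tau_prod r i * w_hi^Suc i))
          - K_ratio r 1 * tau_prod r 1 * w_hi^Suc 1\<bar> \<le> \<delta> * CA"
    unfolding CA_def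
    by (rule abs_sum_perturbed_le) (use two_le_n coeff_ratio_1 delta_pos coeff_ratio_small in auto)
  then show ?thesis
    unfolding scaled_A_expansion[OF eps_pos] k1_def by (simp add: power2_eq_square)
qed

lemma scaled_P_approx: "\<bar>P_poly n r \<gamma> (w_hi/\<epsilon>) - 1\<bar> \<le> \<delta> * CP"
proof -
  have "\<bar>(\<Sum>i\<le>n. weight \<gamma> i / \<epsilon>^i * (tau_prod r i * w_hi^i)) - tau_prod r 0 * w_hi^0\<bar> \<le> \<delta> * CP"
    unfolding CP_def
    by (rule abs_sum_perturbed_le) (use delta_pos weight_ratio_small in \<open>auto simp: weight_def\<close>)
  then show ?thesis
    unfolding scaled_P_expansion[OF eps_pos] by simp
qed

lemma scaled_N: "\<epsilon> * N (w/\<epsilon>) = Ftot * w - \<epsilon> * Etot"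
  using eps_pos by (simp add: N_def field_simps)

lemma scaled_D_lower:
  assumes "w_lo \<le> w" "w \<le> w_hi"
  shows "c1 * w^2 / 2 \<le> \<epsilon> * D (w/\<epsilon>)"
proof -
  have "c1 * w_lo^2 \<le> c1 * w^2"
    using assms w_lo_pos c1_pos by (simp add: power_mono)
  then show ?thesis
    using scaled_D_approx[of w] assms w_lo_pos radius by (auto simp: small_radius_def abs_le_iff)
qed

lemma D_pos_between:
  assumes "z \<in> {w_lo/\<epsilon>..w_hi/\<epsilon>}"
  shows "0 < D z"
proof -
  have w: "w_lo \<le> \<epsilon> * z" "\<epsilon> * z \<le> w_hi" using assms eps_pos by (auto simp: field_simps)
  have "0 < \<epsilon> * z" using w w_lo_pos by linarith
  then have "0 < c1 * (\<epsilon> * z)^2 / 2" using c1_pos by (simp add: power2_eq_square)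
  also have "\<dots> \<le> \<epsilon> * D z" using scaled_D_lower[OF w] eps_pos by simp
  finally show ?thesis using eps_pos by (simp add: zero_less_mult_iff)
qed

lemma scaled_N_lo: "Ftot * w_lo / 2 \<le> \<epsilon> * N (w_lo/\<epsilon>)"
  using scaled_N[of w_lo] eps_less_delta Etot_pos radius
  by (simp add: small_radius_def) (smt (verit) mult_strict_right_mono)

lemma N_lo_pos: "0 < N (w_lo/\<epsilon>)"
proof -
  have "0 < \<epsilon> * N (w_lo/\<epsilon>)" using scaled_N_lo Ftot_pos w_lo_pos by (smt (verit) half_gt_zero mult_pos_pos)
  then show ?thesis using eps_pos by (simp add: zero_less_mult_iff)
qed

lemma X_lo_ge: "2 * Stot \<le> X (w_lo/\<epsilon>)"
proof -
  have D_up: "\<epsilon> * D (w_lo/\<epsilon>) \<le> 3/2 * c1 * w_lo^2"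
    using scaled_D_approx[of w_lo] w_lo_pos w_lo_less_w_hi radius by (auto simp: small_radius_def abs_le_iff)
  have D_pos: "0 < \<epsilon> * D (w_lo/\<epsilon>)"
    using D_pos_between[of "w_lo/\<epsilon>"] w_lo_less_w_hi eps_pos by (simp add: divide_right_mono)
  have "2 * Stot = (Ftot * w_lo / 2) / (3/2 * c1 * w_lo^2)"
    using Stot_pos c1_pos w_lo_pos by (simp add: w_lo_def field_simps power2_eq_square)
  also have "\<dots> \<le> (\<epsilon> * N (w_lo/\<epsilon>)) / (\<epsilon> * D (w_lo/\<epsilon>))"
    using scaled_N_lo D_up D_pos N_lo_pos eps_pos Ftot_pos w_lo_pos by (intro frac_le) auto
  also have "\<dots> = X (w_lo/\<epsilon>)" using eps_pos by (simp add: X_def)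
  finally show ?thesis .
qed

lemma root_conditions_between:
  assumes "z \<in> {w_lo/\<epsilon>..w_hi/\<epsilon>}"
  shows "0 < z" "0 < N z" "0 < D z"
proof -
  show "0 < z" using assms w_lo_pos eps_pos by (auto intro: less_le_trans[OF divide_pos_pos])
  show "0 < N z" using N_lo_pos N_mono[of "w_lo/\<epsilon>" z] assms by simp
  show "0 < D z" using D_pos_between assms .
qed

lemma g_lo_pos: "0 < g (w_lo/\<epsilon>)"
proof -
  have z: "w_lo/\<epsilon> \<in> {w_lo/\<epsilon>..w_hi/\<epsilon>}"
    using w_lo_less_w_hi eps_pos by (simp add: divide_right_mono)
  note root = steady_values[OF root_conditions_between[OF z]]
  have "X (w_lo/\<epsilon>) \<le> X (w_lo/\<epsilon>) * P_poly n r \<gamma> (w_lo/\<epsilon>)"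
    using root(1) P_poly_ge_1 root_conditions_between(1)[OF z] by simp
  then have "2 * Stot \<le> X (w_lo/\<epsilon>) * P_poly n r \<gamma> (w_lo/\<epsilon>)" using X_lo_ge by linarith
  then show ?thesis using root(3,4) Stot_pos unfolding g_def by linarith
qed

lemma X_hi_le: "X (w_hi/\<epsilon>) \<le> G / 4"
proof -
  have z: "w_hi/\<epsilon> \<in> {w_lo/\<epsilon>..w_hi/\<epsilon>}"
    using w_lo_less_w_hi eps_pos by (simp add: divide_right_mono)
  have D_low: "c1 * w_hi^2 / 2 \<le> \<epsilon> * D (w_hi/\<epsilon>)" and "0 < c1 * w_hi^2 / 2"
    using scaled_D_lower[of w_hi] w_lo_less_w_hi w_lo_pos c1_pos by simp_all
  have "X (w_hi/\<epsilon>) = (\<epsilon> * N (w_hi/\<epsilon>)) / (\<epsilon> * D (w_hi/\<epsilon>))" using eps_pos by (simp add: X_def)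
  also have "\<dots> \<le> (Ftot * w_hi) / (c1 * w_hi^2 / 2)"
    using root_conditions_between[OF z] D_low \<open>0 < c1 * w_hi^2 / 2\<close> scaled_N[of w_hi] eps_pos Etot_pos
      Ftot_pos w_lo_pos w_lo_less_w_hi
    by (intro frac_le) auto
  also have "\<dots> = G / 4"
    using Ftot_pos c1_pos G_pos by (simp add: w_hi_def field_simps power2_eq_square)
  finally show ?thesis .
qed

lemma XA_hi_le: "X (w_hi/\<epsilon>) * A_poly n r \<gamma> (w_hi/\<epsilon>) \<le> t0 + \<eta>"
proof -
  define EA where "EA = \<epsilon> * (w_hi/\<epsilon>) * A_poly n r \<gamma> (w_hi/\<epsilon>)"
  have z: "w_hi/\<epsilon> \<in> {w_lo/\<epsilon>..w_hi/\<epsilon>}"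
    using w_lo_less_w_hi eps_pos by (simp add: divide_right_mono)
  note pos = root_conditions_between[OF z]
  have "0 < EA" using A_poly_pos pos eps_pos w_lo_pos w_lo_less_w_hi by (simp add: EA_def)
  have D_pos: "0 < \<epsilon> * D (w_hi/\<epsilon>)" using pos eps_pos by simp
  have D_low: "c1 * w_hi^2 - \<delta> * CD \<le> \<epsilon> * D (w_hi/\<epsilon>)"
    using scaled_D_approx[of w_hi] w_lo_pos w_lo_less_w_hi by (simp add: abs_le_iff)
  have "X (w_hi/\<epsilon>) * A_poly n r \<gamma> (w_hi/\<epsilon>) = (\<epsilon> * N (w_hi/\<epsilon>)) * EA / (w_hi * (\<epsilon> * D (w_hi/\<epsilon>)))"
    using eps_pos w_lo_pos w_lo_less_w_hi by (simp add: X_def EA_def field_simps)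
  also have "\<dots> \<le> (Ftot * w_hi) * EA / (w_hi * (\<epsilon> * D (w_hi/\<epsilon>)))"
    using scaled_N[of w_hi] eps_pos Etot_pos \<open>0 < EA\<close> D_pos w_lo_pos w_lo_less_w_hi
    by (intro divide_right_mono mult_right_mono) auto
  also have "\<dots> = Ftot * EA / (\<epsilon> * D (w_hi/\<epsilon>))"
    using w_lo_pos w_lo_less_w_hi by simp
  also have "\<dots> \<le> t0 + \<eta>"
  proof -
    have "Ftot * EA \<le> Ftot * (k1 * w_hi^2 + \<delta> * CA)"
      using scaled_A_approx Ftot_pos by (simp add: EA_def abs_le_iff)
    also have "\<dots> = t0 * c1 * w_hi^2 + \<delta> * Ftot * CA"
      using Ftot_k1_eq by (simp add: algebra_simps)
    also have "\<dots> \<le> (t0 + \<eta>) * (c1 * w_hi^2 - \<delta> * CD)"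
      using radius by (simp add: small_radius_def algebra_simps)
    also have "\<dots> \<le> (t0 + \<eta>) * (\<epsilon> * D (w_hi/\<epsilon>))"
      using D_low t0_nonneg eta_pos by (intro mult_left_mono) auto
    finally show ?thesis using D_pos by (simp add: divide_le_eq)
  qed
  finally show ?thesis .
qed

lemma P_hi_le: "P_poly n r \<gamma> (w_hi/\<epsilon>) \<le> 2"
  using scaled_P_approx radius by (simp add: small_radius_def abs_le_iff)

lemma g_hi_neg: "g (w_hi/\<epsilon>) < 0"
proof -
  define z where "z = w_hi/\<epsilon>"
  define q where "q = X z * A_poly n r \<gamma> z"
  have "z \<in> {w_lo/\<epsilon>..w_hi/\<epsilon>}"
    using w_lo_less_w_hi eps_pos by (simp add: z_def divide_right_mono)
  note pos = root_conditions_between[OF this] and root = steady_values[OF root_conditions_between[OF this]]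
  have "0 \<le> q" using root(1) A_poly_pos[OF pos(1)] by (simp add: q_def)
  have "Etot - z * F z = Etot * (q / (1 + q))"
    using root(6) \<open>0 \<le> q\<close> by (simp add: q_def field_simps)
  also have "\<dots> \<le> Etot * (t0 / (1 + t0) + \<eta>)"
  proof -
    have "q / (1 + q) \<le> t0 / (1 + t0) + \<eta>"
      using \<open>0 \<le> q\<close> XA_hi_le t0_nonneg eta_pos
      by (intro frac_one_plus_le) (simp_all add: q_def z_def)
    then show ?thesis using Etot_pos by (intro mult_left_mono) auto
  qed
  also have "\<dots> = Ftot / \<kappa> + G / 4"
    using Etot_t0_frac Etot_pos by (simp add: \<eta>_def algebra_simps)
  finally have "Etot - z * F z \<le> Ftot / \<kappa> + G / 4" .
  moreover have "X z * P_poly n r \<gamma> z \<le> G / 4 * 2"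
    using X_hi_le P_hi_le root(1) P_poly_ge_1[of z] pos(1) unfolding z_def
    by (intro mult_mono) auto
  ultimately show ?thesis
    using root(2) G_pos G_def unfolding z_def[symmetric] g_def by linarith
qed

lemma multistationary_rescaled: "multistationary n (rescale n r \<gamma>) Stot Etot Ftot"
proof (rule multistationary_of_sign_change)
  show "0 < w_lo/\<epsilon>" "w_lo/\<epsilon> < w_hi/\<epsilon>"
    using w_lo_pos w_lo_less_w_hi eps_pos by (simp_all add: divide_strict_right_mono)
qed (use N_lo_pos D_pos_between g_lo_pos g_hi_neg in auto)

end

context multistationarity_regime
begin

lemma exists_admissible_bound:
  "\<exists>M. (\<forall>i\<in>{1..4*n-2}. 0 < M i) \<and>
     (\<forall>\<gamma>. admissible_rescaling n M \<gamma> \<longrightarrow> multistationary n (rescale n r \<gamma>) Stot Etot Ftot)"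
proof -
  obtain \<delta> where radius: "small_radius \<delta>" using small_radius_exists by blast
  have "multistationary n (rescale n r \<gamma>) Stot Etot Ftot"
    if "admissible_rescaling n (\<lambda>_. \<delta>) \<gamma>" for \<gamma>
  proof -
    interpret small_rescaling n r Stot Etot Ftot \<delta> \<gamma>
      using radius that by unfold_locales
    show ?thesis by (rule multistationary_rescaled)
  qed
  then show ?thesis
    using radius by (intro exI[of _ "\<lambda>_. \<delta>"]) (simp add: small_radius_def)
qed

lemma multistationary_powr_scaling:
  fixes h :: "nat \<Rightarrow> real"
  assumes "\<forall>i\<in>{4..2*n+3}. 0 < h i" "\<forall>i\<in>{1..n}. real i * h (n+5) < h (i+3)"
    "\<forall>i\<in>{1..n}. i \<noteq> 2 \<longrightarrow> (real i - 1) * h (n+5) < h (n+i+3)"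
  shows "\<exists>t0>0. \<forall>t. 0 < t \<and> t < t0 \<longrightarrow>
           multistationary n (rescale n r (\<lambda>j. t powr h (j+3))) Stot Etot Ftot"
proof -
  obtain M where M_pos: "\<forall>i\<in>{1..4*n-2}. 0 < M i"
    and M_multistationary: "\<And>\<gamma>. admissible_rescaling n M \<gamma> \<Longrightarrow> multistationary n (rescale n r \<gamma>) Stot Etot Ftot"
    using exists_admissible_bound by blast
  have "\<forall>\<^sub>F t in at_right 0. admissible_rescaling n M (\<lambda>j. t powr h (j+3))"
    using eventually_admissible_powr[OF two_le_n M_pos assms] .
  then show ?thesis
    unfolding eventually_at_right_field using M_multistationary by blast
qed

end

lemma multistationary_rates_exist:
  assumes "2 \<le> n" "0 < Stot" "0 < Etot" "0 < Ftot" "Ftot < Stot"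
  shows "\<exists>r. pos_rates n r \<and> multistationary n r Stot Etot Ftot"
proof -
  define r where "r = \<lparr>kon = (\<lambda>_. 1), koff = (\<lambda>_. 1),
    kcat = (\<lambda>i. if i = 1 then max (Ftot / (Stot - Ftot)) (Ftot / Etot) + 1 else 1),
    lon = (\<lambda>_. 1), loff = (\<lambda>_. 1), lcat = (\<lambda>_. 1)\<rparr>"
  define h :: "nat \<Rightarrow> real" where "h j = (if j = n+5 then 1 else real j)" for j
  have "0 < Ftot / Etot" using assms by simp
  then have "pos_rates n r" by (auto simp: pos_rates_def r_def)
  moreover have "multistationarity_regime n r Stot Etot Ftot"
    using assms \<open>pos_rates n r\<close> by unfold_locales (simp_all add: r_def)
  moreover have "\<forall>i\<in>{4..2*n+3}. 0 < h i" "\<forall>i\<in>{1..n}. real i * h (n+5) < h (i+3)"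
    "\<forall>i\<in>{1..n}. i \<noteq> 2 \<longrightarrow> (real i - 1) * h (n+5) < h (n+i+3)"
    by (auto simp: h_def)
  ultimately obtain t0 where "0 < t0"
    and "\<forall>t. 0 < t \<and> t < t0 \<longrightarrow> multistationary n (rescale n r (\<lambda>j. t powr h (j+3))) Stot Etot Ftot"
    using multistationarity_regime.multistationary_powr_scaling by blast
  moreover have "pos_rates n (rescale n r (\<lambda>j. (t0/2) powr h (j+3)))"
    using \<open>pos_rates n r\<close> \<open>0 < t0\<close> by (intro pos_rates_rescale) auto
  ultimately show ?thesis by (intro exI[of _ "rescale n r (\<lambda>j. (t0/2) powr h (j+3))"]) simp
qed

theorem theorem4p1:
  fixes n :: nat and Stot Etot Ftot :: real
  assumes "2 \<le> n"
    and "0 < Stot" and "0 < Etot" and "0 < Ftot"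
    and "Stot > Ftot"
  shows
   "(\<exists>r. pos_rates n r \<and> multistationary n r Stot Etot Ftot)
    \<and>
    (\<forall>r (h :: nat \<Rightarrow> real).
       pos_rates n r \<and>
       kcat r 1 / lcat r 1 > max (Ftot / (Stot - Ftot)) (Ftot / Etot) \<and>
       (\<forall>i\<in>{4..2*n+3}. 0 < h i) \<and>
       (\<forall>i\<in>{1..n}. real i * h (n+5) < h (i+3)) \<and>
       (\<forall>i\<in>{1..n}. i \<noteq> 2 \<longrightarrow> (real i - 1) * h (n+5) < h (n+i+3))
       \<longrightarrow> (\<exists>t0 > 0. \<forall>t. 0 < t \<and> t < t0 \<longrightarrow>
              multistationary n
                (r\<lparr>kon := (\<lambda>i. if i = 0 then t powr h (n+4) * kon r 0
                                else t powr (h (n+4+i) - h (i+3)) * kon r i),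
                   lon := (\<lambda>i. t powr (h (n+4+i) - h (i+4)) * lon r i)\<rparr>)
                Stot Etot Ftot))
    \<and>
    (\<forall>r. pos_rates n r \<and>
       kcat r 1 / lcat r 1 > max (Ftot / (Stot - Ftot)) (Ftot / Etot)
       \<longrightarrow> (\<exists>M :: nat \<Rightarrow> real. (\<forall>i\<in>{1..4*n-2}. 0 < M i) \<and>
            (\<forall>\<gamma> :: nat \<Rightarrow> real.
               (\<forall>i\<in>{1..2*n}. 0 < \<gamma> i) \<and>
               (\<forall>i\<in>{1..2*n}. \<gamma> i < M i) \<and>
               (\<forall>i\<in>{1..n}. \<gamma> i / \<gamma> (n+2) ^ i < M (2*n+i)) \<and>
               (\<forall>i\<in>{3..n}. \<gamma> (n+i) / \<gamma> (n+2) ^ (i-1) < M (3*n-2+i))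
               \<longrightarrow> multistationary n
                     (r\<lparr>kon := (\<lambda>i. if i = 0 then \<gamma> (n+1) * kon r 0
                                     else \<gamma> (n+1+i) / \<gamma> i * kon r i),
                        lon := (\<lambda>i. \<gamma> (n+1+i) / \<gamma> (i+1) * lon r i)\<rparr>)
                     Stot Etot Ftot)))"
proof -
  have regime: "multistationarity_regime n r Stot Etot Ftot"
    if "pos_rates n r \<and> max (Ftot / (Stot - Ftot)) (Ftot / Etot) < kcat r 1 / lcat r 1" for r
    using assms that by unfold_locales auto
  show ?thesis
    unfolding rescale_powr[symmetric] rescale_def[symmetric] admissible_rescaling_def[symmetric]
  proof (intro conjI allI impI)
    show "\<exists>r. pos_rates n r \<and> multistationary n r Stot Etot Ftot"
      using multistationary_rates_exist[OF assms] .
  qed (use multistationarity_regime.multistationary_powr_scaling[OF regime]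
      multistationarity_regime.exists_admissible_bound[OF regime] in auto)
qed

end
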